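(* Let $b\ge 1$ and let $r=(r_1,r_2,\ldots,r_\ell)$ be an ordered partition of $b$. The number of ways that $r$ can have an ordered partition of $b$ embedded inside it (counting nontrivial embeddings of every ordered partition $q$ of $b$ into $r$, together with the one trivial embedding of $r$ into itself) is \[ \prod_{i=1}^{\ell}(r_i+1). \] Equivalently, this is the number of cards for $b$ balls whose right partition is $r$.
   Context: For an integer $b\ge 0$, an ordered partition of $b$ is a finite sequence $(q_1,\ldots,q_k)$ of positive integers summing to $b$ (for $b=0$ the only one is the empty sequence). An ordered partition $(q_1,\ldots,q_k)$ with $k\ge1$ is nontrivially embedded into an ordered partition $(r_1,\ldots,r_\ell)$ by a choice of indices $1\le i_2<i_3<\cdots<i_k\le \ell$ with $q_j\le r_{i_j}$ for $2\le j\le k$; different index tuples count as different embeddings. The trivial embedding of $q$ into $r$ exists only when $q=r$. A card for $b$ balls is either (i) a trivial card, given by an ordered partition $q$ of $b$, whose left and right partitions are both $q$; or (ii) a throw card, given by ordered partitions $q=(q_1,\ldots,q_k)$ ($k\ge1$) and $r=(r_1,\ldots,r_\ell)$ of $b$ together with a nontrivial embedding $(i_2,\ldots,i_k)$ of $q$ into $r$; its left partition is $q$ and its right partition is $r$. Different index tuples give different cards, and a throw card is distinct from the trivial card even when $q=r$. *)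

theory Defs
  imports Main
begin

definition ordered_partition :: "nat \<Rightarrow> nat list \<Rightarrow> bool" where
  "ordered_partition b q \<longleftrightarrow> (\<forall>x\<in>set q. 0 < x) \<and> sum_list q = b"

(* Nontrivial embeddings of q = (q_1,...,q_k), k >= 1, into r = (r_1,...,r_l):
   index tuples (i_2,...,i_k) with 1 <= i_2 < ... < i_k <= l and q_j <= r_{i_j}.
   Lists are 0-indexed here: the tuple is a list "is" of length k-1 with
   is!(j-2) = i_j - 1, so the condition reads q!(j+1) <= r!(is!j) for j < k-1. *)
definition nontriv_embeddings :: "nat list \<Rightarrow> nat list \<Rightarrow> nat list set" where
  "nontriv_embeddings q r =
     (if q = [] then {} else
      {is. length is = length q - 1 \<and> sorted_wrt (<) is \<and> (\<forall>i\<in>set is. i < length r)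
           \<and> (\<forall>j < length is. q ! (j + 1) \<le> r ! (is ! j))})"

datatype card = Trivial "nat list" | Throw "nat list" "nat list" "nat list"

(* Cards for b balls. Throw q r is: left partition q, right partition r, embedding is. *)
definition cards :: "nat \<Rightarrow> card set" where
  "cards b = {Trivial q | q. ordered_partition b q}
     \<union> {Throw q r is | q r is. ordered_partition b q \<and> q \<noteq> [] \<and> ordered_partition b r
                          \<and> is \<in> nontriv_embeddings q r}"

fun right_partition :: "card \<Rightarrow> nat list" where
  "right_partition (Trivial q) = q"
| "right_partition (Throw q r is) = r"

end

theory Submission
  imports Defs
begin

text \<open>
  A card with right partition \<open>r\<close> other than the trivial one is determined by the list
  \<open>c \<le> r\<close> (componentwise, \<open>c \<noteq> r\<close>) of the parts of \<open>q\<close> placed into \<open>r\<close>: the positions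
  with \<open>c\<^sub>i > 0\<close> form the embedding, the values \<open>c\<^sub>i\<close> there are \<open>q\<^sub>2, \<dots>, q\<^sub>k\<close>, and
  \<open>q\<^sub>1 = b - \<Sum>c\<^sub>i > 0\<close>. Conversely every \<open>c\<close> with \<open>0 \<le> c\<^sub>i \<le> r\<^sub>i\<close> arises, so adding
  back the trivial card (which corresponds to \<open>c = r\<close>) gives \<open>\<Prod>(r\<^sub>i + 1)\<close> cards.
\<close>

definition dominated_lists :: "nat list \<Rightarrow> nat list set" where
  "dominated_lists r = {c. list_all2 (\<le>) c r}"

lemma dominated_lists_Nil: "dominated_lists [] = {[]}"
  by (simp add: dominated_lists_def)

lemma dominated_lists_Cons:
  "dominated_lists (a # r) = (\<lambda>(x, c). x # c) ` ({..a} \<times> dominated_lists r)"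
  by (auto simp: dominated_lists_def list_all2_Cons2)

lemma finite_dominated_lists: "finite (dominated_lists r)"
  by (induction r) (simp_all add: dominated_lists_Nil dominated_lists_Cons)

lemma card_dominated_lists: "card (dominated_lists r) = (\<Prod>x\<leftarrow>r. x + 1)"
proof (induction r)
  case (Cons a r)
  have "inj_on (\<lambda>(x, c). x # c) ({..a} \<times> dominated_lists r)"
    by (auto simp: inj_on_def)
  with Cons show ?case
    by (simp add: dominated_lists_Cons card_image card_cartesian_product)
qed (simp add: dominated_lists_Nil)

lemma self_in_dominated_lists: "r \<in> dominated_lists r"
  by (simp add: dominated_lists_def list_all2_refl)

lemma sum_list_less_if_dominated:
  assumes "c \<in> dominated_lists r" "c \<noteq> r"
  shows "sum_list c < sum_list r"
proof -
  have len: "length c = length r" and le: "\<forall>i<length r. c ! i \<le> r ! i"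
    using assms(1) by (simp_all add: dominated_lists_def list_all2_conv_all_nth)
  obtain i where i: "i < length r" "c ! i \<noteq> r ! i"
    using assms(2) len by (auto simp: list_eq_iff_nth_eq)
  have "c ! i \<le> r ! i"
    using le i(1) by blast
  then have "c ! i < r ! i"
    using i(2) by simp
  then have "sum (nth c) {..<length r} < sum (nth r) {..<length r}"
    using le i(1) by (intro sum_strict_mono_ex1) auto
  then show ?thesis
    using len by (simp add: sum_list_sum_nth atLeast0LessThan)
qed

definition positive_indices :: "nat list \<Rightarrow> nat list" where
  "positive_indices c = filter (\<lambda>i. 0 < c ! i) [0..<length c]"

lemma set_positive_indices: "set (positive_indices c) = {i. i < length c \<and> 0 < c ! i}"
  by (auto simp: positive_indices_def)

lemma sorted_positive_indices: "sorted_wrt (<) (positive_indices c)"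
  by (simp add: positive_indices_def sorted_wrt_filter)

lemma sum_list_positive_entries:
  "sum_list (map (nth c) (positive_indices c)) = sum_list c"
proof -
  have "sum_list (map (nth c) (positive_indices c)) = sum (nth c) {i. i < length c \<and> 0 < c ! i}"
    by (simp add: positive_indices_def sum_list_distinct_conv_sum_set set_positive_indices)
  also have "\<dots> = sum (nth c) {..<length c}"
    by (rule sum.mono_neutral_left) auto
  finally show ?thesis
    by (simp add: sum_list_sum_nth atLeast0LessThan)
qed

lemma positive_indices_inject:
  assumes "length c = length d" "positive_indices c = positive_indices d"
    and "map (nth c) (positive_indices c) = map (nth d) (positive_indices d)"
  shows "c = d"
proof (rule nth_equalityI)
  fix i assume i: "i < length c"
  show "c ! i = d ! i"
  proof (cases "0 < c ! i")
    case True
    then have "i \<in> set (positive_indices c)"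
      using i by (simp add: set_positive_indices)
    then show ?thesis
      using assms(2,3) by simp
  next
    case False
    have "i < length d"
      using i assms(1) by simp
    moreover have "i \<notin> set (positive_indices c)"
      using False by (simp add: set_positive_indices)
    ultimately show ?thesis
      using False assms(2) by (simp add: set_positive_indices)
  qed
qed (fact assms(1))

definition scatter :: "nat \<Rightarrow> nat list \<Rightarrow> nat list \<Rightarrow> nat list" where
  "scatter n is xs = map (\<lambda>i. case map_of (zip is xs) i of None \<Rightarrow> 0 | Some x \<Rightarrow> x) [0..<n]"

lemma length_scatter: "length (scatter n is xs) = n"
  by (simp add: scatter_def)

context
  fixes n :: nat and "is" xs :: "nat list"
  assumes length_eq: "length is = length xs" and sorted: "sorted_wrt (<) is"
    and bounded: "\<forall>i\<in>set is. i < n"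
begin

lemma scatter_nth_index:
  assumes "j < length is"
  shows "scatter n is xs ! (is ! j) = xs ! j"
proof -
  have "distinct is"
    using sorted by (simp add: strict_sorted_iff)
  then show ?thesis
    using assms length_eq bounded by (simp add: scatter_def map_of_zip_nth)
qed

lemma scatter_nth_outside:
  assumes "i < n" "i \<notin> set is"
  shows "scatter n is xs ! i = 0"
proof -
  have "map_of (zip is xs) i = None"
    using assms(2) map_of_zip_is_None[OF length_eq] by simp
  then show ?thesis
    using assms(1) by (simp add: scatter_def)
qed

lemma map_nth_scatter: "map (nth (scatter n is xs)) is = xs"
  using length_eq by (intro nth_equalityI) (simp_all add: scatter_nth_index)

lemma positive_indices_scatter:
  assumes "\<forall>x\<in>set xs. 0 < x"
  shows "positive_indices (scatter n is xs) = is"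
proof (rule sorted_distinct_set_unique)
  show "set (positive_indices (scatter n is xs)) = set is"
  proof (intro set_eqI iffI)
    fix i assume "i \<in> set (positive_indices (scatter n is xs))"
    then show "i \<in> set is"
      using scatter_nth_outside by (fastforce simp: set_positive_indices length_scatter)
  next
    fix i assume "i \<in> set is"
    then obtain j where "j < length is" "i = is ! j"
      by (auto simp: in_set_conv_nth)
    then show "i \<in> set (positive_indices (scatter n is xs))"
      using assms bounded length_eq
      by (auto simp: set_positive_indices length_scatter scatter_nth_index)
  qed
qed (use sorted sorted_positive_indices in \<open>simp_all add: strict_sorted_iff\<close>)

end

definition throw_of :: "nat \<Rightarrow> nat list \<Rightarrow> nat list \<times> nat list" where
  "throw_of b c = ((b - sum_list c) # map (nth c) (positive_indices c), positive_indices c)"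

abbreviation throws_into :: "nat \<Rightarrow> nat list \<Rightarrow> (nat list \<times> nat list) set" where
  "throws_into b r \<equiv> Sigma {q. ordered_partition b q \<and> q \<noteq> []} (\<lambda>q. nontriv_embeddings q r)"

lemma finite_nonempty_ordered_partitions: "finite {q. ordered_partition b q \<and> q \<noteq> []}"
proof (rule finite_subset)
  show "{q. ordered_partition b q \<and> q \<noteq> []} \<subseteq> {xs. set xs \<subseteq> {0..b} \<and> length xs \<le> b}"
  proof clarify
    fix q assume q: "ordered_partition b q"
    have "\<forall>x\<in>set q. 0 < x"
      using q by (simp add: ordered_partition_def)
    then have "length q \<le> sum_list q"
      by (induction q) (auto simp: Suc_le_eq)
    moreover have "set q \<subseteq> {0..b}"
      using q member_le_sum_list by (fastforce simp: ordered_partition_def)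
    ultimately show "set q \<subseteq> {0..b} \<and> length q \<le> b"
      using q by (simp add: ordered_partition_def)
  qed
qed (rule finite_lists_length_le[OF finite_atLeastAtMost])

lemma finite_nontriv_embeddings: "finite (nontriv_embeddings q r)"
proof (rule finite_subset)
  show "nontriv_embeddings q r \<subseteq> {xs. set xs \<subseteq> {..<length r} \<and> length xs = length q - 1}"
    unfolding nontriv_embeddings_def by auto
qed (rule finite_lists_length_eq[OF finite_lessThan])

lemma finite_throws_into: "finite (throws_into b r)"
  using finite_nonempty_ordered_partitions finite_nontriv_embeddings by blast

lemma throw_of_mem_throws_into:
  assumes r: "ordered_partition b r" and c: "c \<in> dominated_lists r - {r}"
  shows "throw_of b c \<in> throws_into b r"
proof -
  have le: "length c = length r" "\<forall>i<length r. c ! i \<le> r ! i"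
    using c by (auto simp: dominated_lists_def list_all2_conv_all_nth)
  have "sum_list c < b"
    using sum_list_less_if_dominated c r by (auto simp: ordered_partition_def)
  then have "ordered_partition b ((b - sum_list c) # map (nth c) (positive_indices c))"
    by (auto simp: ordered_partition_def sum_list_positive_entries set_positive_indices)
  moreover have "positive_indices c
      \<in> nontriv_embeddings ((b - sum_list c) # map (nth c) (positive_indices c)) r"
    using le nth_mem[of _ "positive_indices c"]
    by (auto simp: nontriv_embeddings_def sorted_positive_indices set_positive_indices)
  ultimately show ?thesis
    by (simp add: throw_of_def)
qed

lemma throws_into_subset_throw_of_image:
  assumes r: "ordered_partition b r"
  shows "throws_into b r \<subseteq> throw_of b ` (dominated_lists r - {r})"
proof clarify
  fix q "is" assume q: "ordered_partition b q" "q \<noteq> []" and em: "is \<in> nontriv_embeddings q r"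
  have q_pos: "\<forall>x\<in>set (tl q). 0 < x"
    using q by (auto simp: ordered_partition_def list.set_sel(2))
  have emb: "length is = length q - 1" "sorted_wrt (<) is" "\<forall>i\<in>set is. i < length r"
      "\<forall>j<length is. q ! (j + 1) \<le> r ! (is ! j)"
    using em q(2) by (simp_all add: nontriv_embeddings_def)
  then have len: "length is = length (tl q)" and sorted: "sorted_wrt (<) is"
    and bounded: "\<forall>i\<in>set is. i < length r" and fits: "\<forall>j<length is. tl q ! j \<le> r ! (is ! j)"
    by (simp_all add: nth_tl)
  define c where "c = scatter (length r) is (tl q)"
  note scatter = length_scatter scatter_nth_index[OF len sorted bounded]
    scatter_nth_outside[OF len sorted bounded] map_nth_scatter[OF len sorted bounded]
    positive_indices_scatter[OF len sorted bounded q_pos]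
  have "c ! i \<le> r ! i" if "i < length r" for i
  proof (cases "i \<in> set is")
    case True
    then obtain j where "j < length is" "i = is ! j"
      by (auto simp: in_set_conv_nth)
    then show ?thesis
      using fits by (simp add: c_def scatter)
  qed (simp add: c_def scatter that)
  then have "c \<in> dominated_lists r"
    by (simp add: dominated_lists_def list_all2_conv_all_nth c_def scatter)
  have sum_c: "sum_list c = sum_list (tl q)"
    using sum_list_positive_entries[of c] by (simp add: c_def scatter)
  have q_split: "q = (b - sum_list c) # tl q"
    using q by (cases q) (auto simp: ordered_partition_def sum_c)
  have "c \<noteq> r"
  proof
    assume "c = r"
    then have "hd q = 0"
      using q_split r by (metis diff_self_eq_0 list.sel(1) ordered_partition_def)
    moreover have "hd q \<in> set q"
      using q(2) by simp
    ultimately show False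
      using q(1) by (auto simp: ordered_partition_def)
  qed
  moreover have "throw_of b c = (q, is)"
  proof -
    have "throw_of b c = ((b - sum_list c) # tl q, is)"
      by (simp add: throw_of_def c_def scatter)
    then show ?thesis
      by (simp only: q_split[symmetric])
  qed
  ultimately show "(q, is) \<in> throw_of b ` (dominated_lists r - {r})"
    using \<open>c \<in> dominated_lists r\<close> by force
qed

lemma bij_betw_throw_of:
  assumes "ordered_partition b r"
  shows "bij_betw (throw_of b) (dominated_lists r - {r}) (throws_into b r)"
proof (rule bij_betw_imageI)
  show "inj_on (throw_of b) (dominated_lists r - {r})"
  proof (rule inj_onI)
    fix c d assume "c \<in> dominated_lists r - {r}" "d \<in> dominated_lists r - {r}"
      and "throw_of b c = throw_of b d"
    then have "length c = length d" "positive_indices c = positive_indices d"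
      "map (nth c) (positive_indices c) = map (nth d) (positive_indices d)"
      by (auto simp: throw_of_def dominated_lists_def dest!: list_all2_lengthD)
    then show "c = d"
      by (rule positive_indices_inject)
  qed
  show "throw_of b ` (dominated_lists r - {r}) = throws_into b r"
    using throw_of_mem_throws_into[OF assms] throws_into_subset_throw_of_image[OF assms]
    by (intro equalityI image_subsetI) simp_all
qed

lemma card_throws_into:
  assumes "ordered_partition b r"
  shows "1 + card (throws_into b r) = (\<Prod>x\<leftarrow>r. x + 1)"
proof -
  have "card (throws_into b r) = card (dominated_lists r - {r})"
    using bij_betw_throw_of[OF assms] by (simp add: bij_betw_same_card)
  also have "\<dots> = card (dominated_lists r) - 1"
    by (simp add: self_in_dominated_lists finite_dominated_lists)
  finally have "card (throws_into b r) = card (dominated_lists r) - 1" .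
  moreover have "card (dominated_lists r) \<noteq> 0"
    using finite_dominated_lists self_in_dominated_lists by (metis card_0_eq empty_iff)
  ultimately show ?thesis
    by (simp add: card_dominated_lists)
qed

lemma cards_with_right_partition:
  assumes "ordered_partition b r"
  shows "{c \<in> cards b. right_partition c = r}
           = insert (Trivial r) ((\<lambda>(q, is). Throw q r is) ` throws_into b r)"
  using assms by (auto simp: cards_def)

lemma card_cards_with_right_partition:
  assumes "ordered_partition b r"
  shows "card {c \<in> cards b. right_partition c = r} = 1 + card (throws_into b r)"
proof -
  have "inj_on (\<lambda>(q, is). Throw q r is) (throws_into b r)"
    by (auto simp: inj_on_def)
  moreover have "Trivial r \<notin> (\<lambda>(q, is). Throw q r is) ` throws_into b r"
    by auto
  ultimately show ?thesis
    by (simp add: cards_with_right_partition[OF assms] card_image finite_throws_into)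
qed

theorem lemma2:
  fixes b :: nat and r :: "nat list"
  assumes "b \<ge> 1" and "ordered_partition b r"
  shows "1 + (\<Sum>q\<in>{q. ordered_partition b q \<and> q \<noteq> []}. card (nontriv_embeddings q r))
           = (\<Prod>x\<leftarrow>r. x + 1)
       \<and> card {c \<in> cards b. right_partition c = r} = (\<Prod>x\<leftarrow>r. x + 1)"
proof
  have "card (throws_into b r) = (\<Sum>q\<in>{q. ordered_partition b q \<and> q \<noteq> []}. card (nontriv_embeddings q r))"
    using finite_nonempty_ordered_partitions finite_nontriv_embeddings by simp
  then show "1 + (\<Sum>q\<in>{q. ordered_partition b q \<and> q \<noteq> []}. card (nontriv_embeddings q r))
               = (\<Prod>x\<leftarrow>r. x + 1)"
    using card_throws_into[OF assms(2)] by simp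
  show "card {c \<in> cards b. right_partition c = r} = (\<Prod>x\<leftarrow>r. x + 1)"
    using card_cards_with_right_partition[OF assms(2)] card_throws_into[OF assms(2)] by simp
qed

end
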